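(* Let $G$ be a finite connected unweighted graph with graph distance $d$, and let $\delta$ be its four-points hyperbolicity constant. Then there exist four vertices $u_1,u_2,u_3,u_4$ such that $$d(u_1,u_3)+d(u_2,u_4)=\max\{d(u_1,u_2)+d(u_3,u_4),\ d(u_1,u_4)+d(u_2,u_3)\}+2\delta,$$ and such that for every $i\in\{1,2,3,4\}$ and every neighbor $w$ of $u_i$ we have $d(w,u_{i+2})\le d(u_i,u_{i+2})$, where indices are taken modulo $4$.
   Context: The four-points hyperbolicity constant of $G$ is the smallest $\delta\ge0$ such that for all vertices $a,b,c,e$: $d(a,b)+d(c,e)\le\max\{d(a,c)+d(b,e),\ d(a,e)+d(b,c)\}+2\delta$. *)

theory Defs
  imports Complex_Main
begin

definition graph :: "'a set \<Rightarrow> ('a \<Rightarrow> 'a \<Rightarrow> bool) \<Rightarrow> bool" where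
  "graph V E \<longleftrightarrow> finite V \<and> (\<forall>x y. E x y \<longrightarrow> x \<in> V \<and> y \<in> V)
     \<and> (\<forall>x y. E x y \<longrightarrow> E y x) \<and> (\<forall>x. \<not> E x x)"

text \<open>A walk of length n from x to y: vertex list of length n+1.\<close>
definition walk :: "('a \<Rightarrow> 'a \<Rightarrow> bool) \<Rightarrow> 'a list \<Rightarrow> 'a \<Rightarrow> 'a \<Rightarrow> bool" where
  "walk E p x y \<longleftrightarrow> p \<noteq> [] \<and> hd p = x \<and> last p = y
     \<and> (\<forall>i. Suc i < length p \<longrightarrow> E (p ! i) (p ! Suc i))"

definition connected_graph :: "'a set \<Rightarrow> ('a \<Rightarrow> 'a \<Rightarrow> bool) \<Rightarrow> bool" where
  "connected_graph V E \<longleftrightarrow> V \<noteq> {} \<and> (\<forall>x\<in>V. \<forall>y\<in>V. \<exists>p. walk E p x y)"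

definition gdist :: "('a \<Rightarrow> 'a \<Rightarrow> bool) \<Rightarrow> 'a \<Rightarrow> 'a \<Rightarrow> nat" where
  "gdist E x y = (LEAST n. \<exists>p. walk E p x y \<and> length p = Suc n)"

definition four_point_ok :: "'a set \<Rightarrow> ('a \<Rightarrow> 'a \<Rightarrow> bool) \<Rightarrow> real \<Rightarrow> bool" where
  "four_point_ok V E \<delta> \<longleftrightarrow> \<delta> \<ge> 0 \<and> (\<forall>a\<in>V. \<forall>b\<in>V. \<forall>c\<in>V. \<forall>e\<in>V.
     real (gdist E a b + gdist E c e)
       \<le> max (real (gdist E a c + gdist E b e)) (real (gdist E a e + gdist E b c)) + 2 * \<delta>)"

definition hyp_const :: "'a set \<Rightarrow> ('a \<Rightarrow> 'a \<Rightarrow> bool) \<Rightarrow> real" where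
  "hyp_const V E = (LEAST \<delta>. four_point_ok V E \<delta>)"

end

theory Submission
  imports Defs
begin

text \<open>Choose four vertices maximising the defect of the four-point condition, which is
  twice the hyperbolicity constant, and among those a quadruple whose diagonal sum
  \<open>d(u\<^sub>1,u\<^sub>3) + d(u\<^sub>2,u\<^sub>4)\<close> is largest. If a neighbour \<open>w\<close> of \<open>u\<^sub>i\<close> were farther from
  \<open>u\<^sub>i\<^sub>+\<^sub>2\<close>, replacing \<open>u\<^sub>i\<close> by \<open>w\<close> would raise the diagonal sum by at least one, while
  each of the two competing side sums contains exactly one distance from \<open>u\<^sub>i\<close> and so
  grows by at most one. The defect would not drop but the diagonal sum would grow,
  contradicting the choice.\<close>

lemma walk_singleton: "walk E [x] x x"
  by (simp add: walk_def)

lemma walk_Cons: "E w x \<Longrightarrow> walk E p x y \<Longrightarrow> walk E (w # p) w y"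
  unfolding walk_def by (auto simp: nth_Cons hd_conv_nth split: nat.split)

lemma walk_rev:
  assumes sym: "\<And>x y. E x y \<Longrightarrow> E y x" and "walk E p x y"
  shows "walk E (rev p) y x"
proof -
  have step: "E (p ! i) (p ! Suc i)" if "Suc i < length p" for i
    using assms(2) that unfolding walk_def by blast
  have "E (rev p ! i) (rev p ! Suc i)" if "Suc i < length p" for i
  proof -
    have "Suc (length p - 2 - i) = length p - 1 - i" using that by simp
    then show ?thesis
      using step[of "length p - 2 - i"] sym that by (simp add: rev_nth)
  qed
  then show ?thesis using assms(2) unfolding walk_def by (simp add: hd_rev last_rev)
qed

lemma gdist_le_walk_length: "walk E p x y \<Longrightarrow> gdist E x y \<le> length p - 1"
  unfolding gdist_def walk_def by (rule Least_le) (auto intro!: exI[of _ p])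

lemma gdist_self [simp]: "gdist E x x = 0"
  using gdist_le_walk_length[OF walk_singleton] by simp

lemma ex_shortest_walk:
  assumes "connected_graph V E" "x \<in> V" "y \<in> V"
  shows "\<exists>p. walk E p x y \<and> length p = Suc (gdist E x y)"
proof -
  obtain p where p: "walk E p x y" using assms unfolding connected_graph_def by blast
  then have "length p = Suc (length p - 1)" by (cases p) (auto simp: walk_def)
  with p have "\<exists>n p. walk E p x y \<and> length p = Suc n" by blast
  then show ?thesis unfolding gdist_def by (rule LeastI_ex)
qed

lemma ex_lex_max_if_finite:
  fixes f :: "'a \<Rightarrow> 'b::linorder" and g :: "'a \<Rightarrow> 'c::linorder"
  assumes "finite S" "S \<noteq> {}"
  shows "\<exists>x\<in>S. \<forall>y\<in>S. f y \<le> f x \<and> (f y = f x \<longrightarrow> g y \<le> g x)"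
proof -
  define T where "T = {x \<in> S. f x = Max (f ` S)}"
  have "finite T" "T \<noteq> {}"
    using assms Max_in[of "f ` S"] unfolding T_def by fastforce+
  then obtain x where x: "x \<in> T" "g x = Max (g ` T)"
    using Max_in[of "g ` T"] by fastforce
  have "f y \<le> f x \<and> (f y = f x \<longrightarrow> g y \<le> g x)" if "y \<in> S" for y
  proof -
    have "f y \<le> f x" using x that assms by (simp add: T_def)
    moreover have "g y \<le> g x" if "f y = f x"
      using x \<open>y \<in> S\<close> \<open>finite T\<close> that by (simp add: T_def)
    ultimately show ?thesis by simp
  qed
  then show ?thesis using x(1) unfolding T_def by blast
qed

definition four_point_defect :: "('a \<Rightarrow> 'a \<Rightarrow> bool) \<Rightarrow> 'a \<Rightarrow> 'a \<Rightarrow> 'a \<Rightarrow> 'a \<Rightarrow> real" where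
  "four_point_defect E a b c e = real (gdist E a c + gdist E b e)
     - max (real (gdist E a b + gdist E c e)) (real (gdist E a e + gdist E b c))"

lemma four_point_defect_self [simp]: "four_point_defect E a a a a = 0"
  by (simp add: four_point_defect_def)

lemma four_point_ok_iff_defect:
  assumes sym: "\<And>x y. x \<in> V \<Longrightarrow> y \<in> V \<Longrightarrow> gdist E x y = gdist E y x"
  shows "four_point_ok V E \<delta> \<longleftrightarrow>
    \<delta> \<ge> 0 \<and> (\<forall>a\<in>V. \<forall>b\<in>V. \<forall>c\<in>V. \<forall>e\<in>V. four_point_defect E a b c e \<le> 2 * \<delta>)"
proof -
  have "real (gdist E a b + gdist E c e)
      \<le> max (real (gdist E a c + gdist E b e)) (real (gdist E a e + gdist E b c)) + 2 * \<delta>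
    \<longleftrightarrow> four_point_defect E a c b e \<le> 2 * \<delta>"
    if "b \<in> V" "c \<in> V" for a b c e
    using that by (auto simp: four_point_defect_def sym[of c b])
  then show ?thesis unfolding four_point_ok_def by blast
qed

lemma hyp_const_eq_half_max_defect:
  assumes sym: "\<And>x y. x \<in> V \<Longrightarrow> y \<in> V \<Longrightarrow> gdist E x y = gdist E y x"
    and V: "a \<in> V" "b \<in> V" "c \<in> V" "e \<in> V"
    and max: "\<And>a' b' c' e'. a' \<in> V \<Longrightarrow> b' \<in> V \<Longrightarrow> c' \<in> V \<Longrightarrow> e' \<in> V \<Longrightarrow>
      four_point_defect E a' b' c' e' \<le> four_point_defect E a b c e"
  shows "hyp_const V E = four_point_defect E a b c e / 2"
  unfolding hyp_const_def
proof (rule Least_equality)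
  have "0 \<le> four_point_defect E a b c e" using max[of a a a a] V by simp
  then show "four_point_ok V E (four_point_defect E a b c e / 2)"
    using max by (simp add: four_point_ok_iff_defect[OF sym])
next
  fix \<delta> assume "four_point_ok V E \<delta>"
  then have "four_point_defect E a b c e \<le> 2 * \<delta>"
    using V by (simp add: four_point_ok_iff_defect[OF sym])
  then show "four_point_defect E a b c e / 2 \<le> \<delta>" by simp
qed

locale finite_connected_graph =
  fixes V :: "'a set" and E :: "'a \<Rightarrow> 'a \<Rightarrow> bool"
  assumes graph: "graph V E" and connected: "connected_graph V E"
begin

lemma finite_vertices: "finite V"
  using graph by (simp add: graph_def)

lemma nonempty_vertices: "V \<noteq> {}"
  using connected by (simp add: connected_graph_def)

lemma neighbour_in_vertices: "E x w \<Longrightarrow> w \<in> V"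
  using graph by (simp add: graph_def)

lemma gdist_sym_le:
  assumes "x \<in> V" "y \<in> V"
  shows "gdist E y x \<le> gdist E x y"
proof -
  obtain p where p: "walk E p x y" "length p = Suc (gdist E x y)"
    using ex_shortest_walk[OF connected assms] by blast
  have "\<And>x y. E x y \<Longrightarrow> E y x" using graph by (simp add: graph_def)
  with p have "walk E (rev p) y x" by (simp add: walk_rev)
  then show ?thesis using gdist_le_walk_length p(2) by fastforce
qed

lemma gdist_sym: "x \<in> V \<Longrightarrow> y \<in> V \<Longrightarrow> gdist E x y = gdist E y x"
  using gdist_sym_le by (simp add: order_antisym)

lemma gdist_neighbour_le:
  assumes "x \<in> V" "y \<in> V" "E x w"
  shows "gdist E w y \<le> gdist E x y + 1"
proof -
  obtain p where "walk E p x y" "length p = Suc (gdist E x y)"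
    using ex_shortest_walk[OF connected assms(1,2)] by blast
  moreover have "E w x" using graph assms(3) by (simp add: graph_def)
  ultimately show ?thesis using gdist_le_walk_length walk_Cons by fastforce
qed

lemma four_point_defect_rotate:
  assumes "a \<in> V" "b \<in> V" "c \<in> V" "e \<in> V"
  shows "four_point_defect E b c e a = four_point_defect E a b c e"
  using assms unfolding four_point_defect_def by (simp add: gdist_sym[of _ a] max.commute)

lemma four_point_defect_mono_move_away:
  assumes "a \<in> V" "b \<in> V" "c \<in> V" "e \<in> V" "E a w"
    and "gdist E a c < gdist E w c"
  shows "four_point_defect E a b c e \<le> four_point_defect E w b c e"
  using assms gdist_neighbour_le[of a b w] gdist_neighbour_le[of a e w]
  unfolding four_point_defect_def by (auto simp: max_def)

definition extremal_quadruple :: "'a \<Rightarrow> 'a \<Rightarrow> 'a \<Rightarrow> 'a \<Rightarrow> bool" where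
  "extremal_quadruple a b c e \<longleftrightarrow> a \<in> V \<and> b \<in> V \<and> c \<in> V \<and> e \<in> V \<and>
     (\<forall>a'\<in>V. \<forall>b'\<in>V. \<forall>c'\<in>V. \<forall>e'\<in>V.
        four_point_defect E a' b' c' e' \<le> four_point_defect E a b c e \<and>
        (four_point_defect E a' b' c' e' = four_point_defect E a b c e \<longrightarrow>
           gdist E a' c' + gdist E b' e' \<le> gdist E a c + gdist E b e))"

lemma ex_extremal_quadruple: "\<exists>a b c e. extremal_quadruple a b c e"
proof -
  define F where "F = (\<lambda>(a, b, c, e). four_point_defect E a b c e)"
  define G where "G = (\<lambda>(a, b, c, e). gdist E a c + gdist E b e)"
  have "finite (V \<times> V \<times> V \<times> V)" "V \<times> V \<times> V \<times> V \<noteq> {}"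
    using finite_vertices nonempty_vertices by auto
  then obtain q where q: "q \<in> V \<times> V \<times> V \<times> V"
    and max: "\<forall>q'\<in>V \<times> V \<times> V \<times> V. F q' \<le> F q \<and> (F q' = F q \<longrightarrow> G q' \<le> G q)"
    using ex_lex_max_if_finite[of "V \<times> V \<times> V \<times> V" F G] by blast
  obtain a b c e where "q = (a, b, c, e)" by (cases q)
  with q max have "extremal_quadruple a b c e"
    unfolding extremal_quadruple_def F_def G_def by simp
  then show ?thesis by blast
qed

lemma hyp_const_extremal_quadruple:
  "extremal_quadruple a b c e \<Longrightarrow> hyp_const V E = four_point_defect E a b c e / 2"
  by (rule hyp_const_eq_half_max_defect[OF gdist_sym]) (simp_all add: extremal_quadruple_def)

lemma extremal_quadruple_rotate:
  assumes "extremal_quadruple a b c e"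
  shows "extremal_quadruple b c e a"
proof -
  have "a \<in> V" "b \<in> V" "c \<in> V" "e \<in> V" using assms by (simp_all add: extremal_quadruple_def)
  then show ?thesis
    using assms unfolding extremal_quadruple_def
    by (simp add: four_point_defect_rotate gdist_sym[of _ a] gdist_sym[of c e] add.commute)
qed

lemma extremal_quadruple_neighbour:
  assumes ext: "extremal_quadruple a b c e" and "E a w"
  shows "gdist E w c \<le> gdist E a c"
proof (rule ccontr)
  assume far: "\<not> ?thesis"
  have V: "a \<in> V" "b \<in> V" "c \<in> V" "e \<in> V" "w \<in> V"
    using ext neighbour_in_vertices[OF \<open>E a w\<close>] by (simp_all add: extremal_quadruple_def)
  have "four_point_defect E a b c e \<le> four_point_defect E w b c e"
    using four_point_defect_mono_move_away V \<open>E a w\<close> far by simp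
  then have "gdist E w c + gdist E b e \<le> gdist E a c + gdist E b e"
    using ext V unfolding extremal_quadruple_def by (meson order_antisym)
  with far show False by simp
qed

end

theorem mainTheorem5:
  fixes V :: "'a set" and E :: "'a \<Rightarrow> 'a \<Rightarrow> bool"
  assumes "graph V E" and "connected_graph V E"
  shows "\<exists>u :: nat \<Rightarrow> 'a. (\<forall>i<4. u i \<in> V)
    \<and> real (gdist E (u 0) (u 2) + gdist E (u 1) (u 3))
        = max (real (gdist E (u 0) (u 1) + gdist E (u 2) (u 3)))
              (real (gdist E (u 0) (u 3) + gdist E (u 1) (u 2))) + 2 * hyp_const V E
    \<and> (\<forall>i<4. \<forall>w. E (u i) w \<longrightarrow> gdist E w (u ((i + 2) mod 4)) \<le> gdist E (u i) (u ((i + 2) mod 4)))"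
proof -
  interpret finite_connected_graph V E using assms by unfold_locales
  obtain a b c e where ext: "extremal_quadruple a b c e" using ex_extremal_quadruple by blast
  then have V: "a \<in> V" "b \<in> V" "c \<in> V" "e \<in> V" by (simp_all add: extremal_quadruple_def)
  have defect: "real (gdist E a c + gdist E b e)
      = max (real (gdist E a b + gdist E c e)) (real (gdist E a e + gdist E b c)) + 2 * hyp_const V E"
    using hyp_const_extremal_quadruple[OF ext] by (simp add: four_point_defect_def)
  have rotations: "extremal_quadruple b c e a" "extremal_quadruple c e a b" "extremal_quadruple e a b c"
    using ext extremal_quadruple_rotate by blast+
  define u where "u = (!) [a, b, c, e]"
  have u: "u 0 = a" "u 1 = b" "u 2 = c" "u 3 = e" by (simp_all add: u_def)
  have "gdist E w (u ((i + 2) mod 4)) \<le> gdist E (u i) (u ((i + 2) mod 4))"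
    if "i < 4" "E (u i) w" for i w
  proof -
    consider "i = 0" | "i = 1" | "i = 2" | "i = 3" using \<open>i < 4\<close> by linarith
    moreover have "(0 + 2) mod 4 = (2::nat)" "(1 + 2) mod 4 = (3::nat)"
      "(2 + 2) mod 4 = (0::nat)" "(3 + 2) mod 4 = (1::nat)" by simp_all
    ultimately show ?thesis
      using that(2) ext rotations extremal_quadruple_neighbour by cases (simp_all only: u)
  qed
  moreover have "u i \<in> V" if "i < 4" for i
    using V nth_mem[of i "[a, b, c, e]"] \<open>i < 4\<close> by (auto simp: u_def)
  moreover have "real (gdist E (u 0) (u 2) + gdist E (u 1) (u 3))
      = max (real (gdist E (u 0) (u 1) + gdist E (u 2) (u 3)))
            (real (gdist E (u 0) (u 3) + gdist E (u 1) (u 2))) + 2 * hyp_const V E"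
    using defect by (simp only: u)
  ultimately show ?thesis
    by (intro exI[of _ u] conjI allI impI) simp_all
qed

end
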